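(* Let $n\ge1$ be a natural number, let $a,b,\alpha,\beta,\theta$ be variables (with $\beta a-\alpha b\neq0$), and define \[ \Psi_r(n)=\Psi\left(\begin{array}{cc|c} a-\alpha\theta & b-\beta\theta & n \\ \alpha & \beta & r \end{array}\right),\qquad \Phi_r(n)=\Phi\left(\begin{array}{cc|c} a-\alpha\theta & b-\beta\theta & n \\ \alpha & \beta & r \end{array}\right), \] viewed as polynomials in $a,b,\alpha,\beta,\theta$. Then \[ \Psi_r(n)=-\frac{1}{r}\Big(-\frac{\partial}{\partial\theta}\Big)\Psi_{r-1}(n)\ \ (1\le r\le\lfloor n/2\rfloor),\qquad \Phi_r(n)=-\frac{1}{r}\Big(-\frac{\partial}{\partial\theta}\Big)\Phi_{r-1}(n)\ \ (1\le r\le\lfloor (n-1)/2\rfloor). \]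
   Context: $\delta(m)=1$ for $m$ odd, $0$ for $m$ even; $\lfloor\cdot\rfloor$ is the floor. For indeterminates $a,b,\alpha,\beta$ and $n\ge1$, $\Psi\left(\begin{array}{cc|c} a & b & n \\ \alpha & \beta & r \end{array}\right)$ ($0\le r\le\lfloor n/2\rfloor$) and $\Phi\left(\begin{array}{cc|c} a & b & n \\ \alpha & \beta & r \end{array}\right)$ ($0\le r\le\lfloor (n-1)/2\rfloor$) are the unique polynomials in $\mathbb{Z}[a,b,\alpha,\beta]$ such that, identically in $x,y$, $(\beta a-\alpha b)^{\lfloor n/2\rfloor}\frac{x^n+y^n}{(x+y)^{\delta(n)}}=\sum_{r}\Psi\left(\begin{array}{cc|c} a & b & n \\ \alpha & \beta & r \end{array}\right)(\alpha x^2+\beta xy+\alpha y^2)^{\lfloor n/2\rfloor-r}(ax^2+bxy+ay^2)^r$ and $(\beta a-\alpha b)^{\lfloor (n-1)/2\rfloor}\frac{x^n-y^n}{(x-y)(x+y)^{\delta(n-1)}}=\sum_{r}\Phi\left(\begin{array}{cc|c} a & b & n \\ \alpha & \beta & r \end{array}\right)(\alpha x^2+\beta xy+\alpha y^2)^{\lfloor (n-1)/2\rfloor-r}(ax^2+bxy+ay^2)^r$. Substituting $a-\alpha\theta$, $b-\beta\theta$ for $a$, $b$ gives polynomials in $a,b,\alpha,\beta,\theta$. *)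

theory Defs
  imports Complex_Main
begin

definition delta :: "nat \<Rightarrow> nat" where
  "delta m = (if odd m then 1 else 0)"

text \<open>Values of the polynomials Psi and Phi at real arguments a, b, al, be
  (with be*a - al*b nonzero, where the coefficient family is unique).
  The division by (x+y)^delta resp. (x-y)(x+y)^delta is written multiplied out.\<close>

definition Psi :: "nat \<Rightarrow> nat \<Rightarrow> real \<Rightarrow> real \<Rightarrow> real \<Rightarrow> real \<Rightarrow> real" where
  "Psi n r a b al be =
    (THE c :: nat \<Rightarrow> real. (\<forall>k. n div 2 < k \<longrightarrow> c k = 0) \<and>
      (\<forall>x y :: real. (be * a - al * b) ^ (n div 2) * (x ^ n + y ^ n) =
         (x + y) ^ delta n *
         (\<Sum>k\<le>n div 2. c k * (al * x^2 + be * x * y + al * y^2) ^ (n div 2 - k)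
                              * (a * x^2 + b * x * y + a * y^2) ^ k))) r"

definition Phi :: "nat \<Rightarrow> nat \<Rightarrow> real \<Rightarrow> real \<Rightarrow> real \<Rightarrow> real \<Rightarrow> real" where
  "Phi n r a b al be =
    (THE c :: nat \<Rightarrow> real. (\<forall>k. (n - 1) div 2 < k \<longrightarrow> c k = 0) \<and>
      (\<forall>x y :: real. (be * a - al * b) ^ ((n - 1) div 2) * (x ^ n - y ^ n) =
         (x - y) * (x + y) ^ delta (n - 1) *
         (\<Sum>k\<le>(n - 1) div 2. c k * (al * x^2 + be * x * y + al * y^2) ^ ((n - 1) div 2 - k)
                              * (a * x^2 + b * x * y + a * y^2) ^ k))) r"

end

theory Submission
  imports Defs "HOL-Computational_Algebra.Polynomial"
begin

text \<open>Write \<open>P = al x\<^sup>2 + be x y + al y\<^sup>2\<close>, \<open>Q\<^sub>t = (a - al t) x\<^sup>2 + (b - be t) x y + (a - al t) y\<^sup>2\<close>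
  and \<open>d = be a - al b\<close>. Shifting \<open>a, b\<close> by \<open>t\<close> leaves \<open>d\<close> unchanged and \<open>Q\<^sub>0 = Q\<^sub>t + t P\<close>,
  so by the binomial theorem an expansion \<open>\<Sum> c\<^sub>k P\<^bsup>m-k\<^esup> Q\<^sub>0\<^sup>k\<close> becomes one in \<open>P, Q\<^sub>t\<close>
  with coefficients \<open>\<Sum>\<^sub>k c\<^sub>k (k choose j) t\<^bsup>k-j\<^esup>\<close>, and the \<open>t\<close>-derivative of the
  coefficient of index \<open>j - 1\<close> is \<open>j\<close> times that of index \<open>j\<close>.
  Expansions exist: \<open>x\<^sup>n \<plusminus> y\<^sup>n\<close> divided by its factor \<open>(x + y)\<^sup>\<delta>\<close> resp. \<open>(x - y)(x + y)\<^sup>\<delta>\<close>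
  is a form of degree \<open>m\<close> in \<open>x\<^sup>2 + y\<^sup>2\<close> and \<open>x y\<close>, because power sums of \<open>x\<^sup>2, y\<^sup>2\<close> obey
  \<open>p (k + 2) = (x\<^sup>2 + y\<^sup>2) p (k + 1) - (x y)\<^sup>2 p k\<close>, and \<open>d (x\<^sup>2 + y\<^sup>2)\<close>, \<open>d x y\<close> are linear in \<open>P, Q\<^sub>0\<close>.
  They are unique for \<open>d \<noteq> 0\<close>, since then \<open>Q\<^sub>0(1, s) / P(1, s)\<close> takes infinitely many values.\<close>

inductive homogeneous_in ::
  "(real \<Rightarrow> real \<Rightarrow> real) \<Rightarrow> (real \<Rightarrow> real \<Rightarrow> real) \<Rightarrow> nat \<Rightarrow> (real \<Rightarrow> real \<Rightarrow> real) \<Rightarrow> bool"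
  for A B where
  const: "homogeneous_in A B 0 (\<lambda>x y. r)"
| step: "homogeneous_in A B m f \<Longrightarrow> homogeneous_in A B m g \<Longrightarrow>
    (\<And>x y. h x y = A x y * f x y + B x y * g x y) \<Longrightarrow> homogeneous_in A B (Suc m) h"

lemma homogeneous_in_zero: "homogeneous_in A B m (\<lambda>x y. 0)"
  by (induction m) (auto intro: homogeneous_in.intros)

lemma homogeneous_in_add:
  "homogeneous_in A B m f \<Longrightarrow> homogeneous_in A B m g \<Longrightarrow> homogeneous_in A B m (\<lambda>x y. f x y + g x y)"
proof (induction arbitrary: g rule: homogeneous_in.induct)
  case (const r)
  then show ?case
    by cases (auto intro: homogeneous_in.const[of A B "r + _"])
next
  case (step m f1 g1 h)
  from step.prems obtain f2 g2 where
    f2: "homogeneous_in A B m f2" and g2: "homogeneous_in A B m g2"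
    and g: "\<And>x y. g x y = A x y * f2 x y + B x y * g2 x y"
    by cases auto
  show ?case
    by (rule homogeneous_in.step[OF step.IH(1)[OF f2] step.IH(2)[OF g2]])
      (simp add: step.hyps(3) g algebra_simps)
qed

lemma homogeneous_in_scale:
  "homogeneous_in A B m f \<Longrightarrow> homogeneous_in A B m (\<lambda>x y. r * f x y)"
proof (induction rule: homogeneous_in.induct)
  case (const s)
  show ?case by (rule homogeneous_in.const)
next
  case (step m f g h)
  show ?case by (rule homogeneous_in.step[OF step.IH]) (simp add: step.hyps(3) algebra_simps)
qed

lemma homogeneous_in_linear:
  "(\<And>x y. h x y = p * A x y + q * B x y) \<Longrightarrow> homogeneous_in A B 1 h"
  using homogeneous_in.step[OF homogeneous_in.const homogeneous_in.const] by (simp add: mult.commute)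

lemma homogeneous_in_linear_change:
  assumes "homogeneous_in A' B' m f"
    and A': "\<And>x y. s * A' x y = pa * A x y + pb * B x y"
    and B': "\<And>x y. s * B' x y = qa * A x y + qb * B x y"
  shows "homogeneous_in A B m (\<lambda>x y. s ^ m * f x y)"
  using assms(1)
proof (induction rule: homogeneous_in.induct)
  case (const r)
  show ?case by (simp add: homogeneous_in.const)
next
  case (step m f g h)
  let ?F = "\<lambda>x y. s ^ m * f x y" and ?G = "\<lambda>x y. s ^ m * g x y"
  have combination: "homogeneous_in A B m (\<lambda>x y. u * ?F x y + v * ?G x y)" for u v
    using step.IH by (rule homogeneous_in_add[OF homogeneous_in_scale homogeneous_in_scale])
  have "s ^ Suc m * h x y = A x y * (pa * ?F x y + qa * ?G x y) + B x y * (pb * ?F x y + qb * ?G x y)"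
    for x y
  proof -
    have "s ^ Suc m * h x y = (s * A' x y) * ?F x y + (s * B' x y) * ?G x y"
      using step.hyps(3) by (simp add: algebra_simps)
    then show ?thesis by (simp add: A' B' algebra_simps)
  qed
  then show ?case
    by (rule homogeneous_in.step[OF combination combination])
qed

lemma homogeneous_in_expansion:
  assumes "homogeneous_in A B m f"
  shows "\<exists>c. (\<forall>k>m. c k = 0) \<and> (\<forall>x y. f x y = (\<Sum>k\<le>m. c k * A x y ^ (m - k) * B x y ^ k))"
  using assms
proof (induction rule: homogeneous_in.induct)
  case (const r)
  show ?case by (rule exI[of _ "\<lambda>k. if k = 0 then r else 0"]) simp
next
  case (step m f g h)
  then obtain c d where c: "\<forall>k>m. c k = 0" "\<forall>x y. f x y = (\<Sum>k\<le>m. c k * A x y ^ (m - k) * B x y ^ k)"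
    and d: "\<forall>k>m. d k = 0" "\<forall>x y. g x y = (\<Sum>k\<le>m. d k * A x y ^ (m - k) * B x y ^ k)"
    by blast
  define e where "e k = c k + (if k = 0 then 0 else d (k - 1))" for k
  have "h x y = (\<Sum>k\<le>Suc m. e k * A x y ^ (Suc m - k) * B x y ^ k)" for x y
  proof -
    have "A x y * f x y = (\<Sum>k\<le>Suc m. c k * A x y ^ (Suc m - k) * B x y ^ k)"
      using c by (simp add: sum_distrib_left Suc_diff_le algebra_simps)
    moreover have "B x y * g x y = (\<Sum>k\<le>Suc m. (if k = 0 then 0 else d (k - 1)) * A x y ^ (Suc m - k) * B x y ^ k)"
      using d by (subst sum.atMost_Suc_shift) (simp add: sum_distrib_left algebra_simps)
    ultimately show ?thesis
      using step.hyps(3) by (simp add: e_def distrib_right sum.distrib)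
  qed
  moreover have "\<forall>k>Suc m. e k = 0"
    using c(1) d(1) by (simp add: e_def)
  ultimately show ?case by blast
qed

fun lucas :: "(real \<Rightarrow> real \<Rightarrow> real) \<Rightarrow> (real \<Rightarrow> real \<Rightarrow> real) \<Rightarrow> nat \<Rightarrow> real \<Rightarrow> real \<Rightarrow> real" where
  "lucas f0 f1 0 = f0"
| "lucas f0 f1 (Suc 0) = f1"
| "lucas f0 f1 (Suc (Suc k)) =
    (\<lambda>x y. (x\<^sup>2 + y\<^sup>2) * lucas f0 f1 (Suc k) x y - (x * y)\<^sup>2 * lucas f0 f1 k x y)"

lemma homogeneous_in_lucas:
  assumes "homogeneous_in (\<lambda>x y. x\<^sup>2 + y\<^sup>2) (\<lambda>x y. x * y) 0 f0"
    and "homogeneous_in (\<lambda>x y. x\<^sup>2 + y\<^sup>2) (\<lambda>x y. x * y) 1 f1"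
  shows "homogeneous_in (\<lambda>x y. x\<^sup>2 + y\<^sup>2) (\<lambda>x y. x * y) k (lucas f0 f1 k)"
  using assms
proof (induction f0 f1 k rule: lucas.induct)
  case (3 f0 f1 k)
  let ?U = "\<lambda>x y::real. x\<^sup>2 + y\<^sup>2" and ?V = "\<lambda>x y::real. x * y"
  have IH: "homogeneous_in ?U ?V k (lucas f0 f1 k)" "homogeneous_in ?U ?V (Suc k) (lucas f0 f1 (Suc k))"
    using "3.IH" "3.prems" by simp_all
  have "homogeneous_in ?U ?V (Suc k) (\<lambda>x y. - (x * y * lucas f0 f1 k x y))"
    by (rule homogeneous_in.step[OF homogeneous_in_zero homogeneous_in_scale[OF IH(1), of "-1"]]) simp
  then show ?case
    by (rule homogeneous_in.step[OF IH(2)]) (simp add: power2_eq_square algebra_simps)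
qed simp_all

lemma lucas_eq_power_sum:
  assumes "h * f0 x y = p + q" and "h * f1 x y = p * x\<^sup>2 + q * y\<^sup>2"
  shows "h * lucas f0 f1 k x y = p * (x\<^sup>2) ^ k + q * (y\<^sup>2) ^ k"
  using assms
proof (induction f0 f1 k rule: lucas.induct)
  case (3 f0 f1 k)
  have "h * lucas f0 f1 (Suc (Suc k)) x y
      = (x\<^sup>2 + y\<^sup>2) * (h * lucas f0 f1 (Suc k) x y) - (x * y)\<^sup>2 * (h * lucas f0 f1 k x y)"
    by (simp add: algebra_simps)
  also have "\<dots> = p * (x\<^sup>2) ^ Suc (Suc k) + q * (y\<^sup>2) ^ Suc (Suc k)"
    using 3 by (simp add: power_mult_distrib algebra_simps)
  finally show ?case .
qed simp_all

definition PQ_expansion ::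
  "nat \<Rightarrow> (real \<Rightarrow> real \<Rightarrow> real) \<Rightarrow> (real \<Rightarrow> real \<Rightarrow> real) \<Rightarrow> real \<Rightarrow> real \<Rightarrow> real \<Rightarrow> real \<Rightarrow> (nat \<Rightarrow> real) \<Rightarrow> bool"
  where
  "PQ_expansion m e F a b al be c \<longleftrightarrow> (\<forall>k>m. c k = 0) \<and>
     (\<forall>x y. (be * a - al * b) ^ m * F x y =
        e x y * (\<Sum>k\<le>m. c k * (al * x\<^sup>2 + be * x * y + al * y\<^sup>2) ^ (m - k)
                              * (a * x\<^sup>2 + b * x * y + a * y\<^sup>2) ^ k))"

lemma Psi_eq_THE_PQ_expansion:
  "Psi n r a b al be =
    (THE c. PQ_expansion (n div 2) (\<lambda>x y. (x + y) ^ delta n) (\<lambda>x y. x ^ n + y ^ n) a b al be c) r"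
  by (simp add: Psi_def PQ_expansion_def)

lemma Phi_eq_THE_PQ_expansion:
  "Phi n r a b al be =
    (THE c. PQ_expansion ((n - 1) div 2) (\<lambda>x y. (x - y) * (x + y) ^ delta (n - 1)) (\<lambda>x y. x ^ n - y ^ n)
       a b al be c) r"
  by (simp add: Phi_def PQ_expansion_def)

lemma PQ_expansion_exists:
  assumes "homogeneous_in (\<lambda>x y. x\<^sup>2 + y\<^sup>2) (\<lambda>x y. x * y) m G" and F: "\<And>x y. F x y = e x y * G x y"
  shows "\<exists>c. PQ_expansion m e F a b al be c"
proof -
  let ?P = "\<lambda>x y. al * x\<^sup>2 + be * x * y + al * y\<^sup>2" and ?Q = "\<lambda>x y. a * x\<^sup>2 + b * x * y + a * y\<^sup>2"
  let ?d = "be * a - al * b"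
  have "homogeneous_in ?P ?Q m (\<lambda>x y. ?d ^ m * G x y)"
    by (rule homogeneous_in_linear_change[OF assms(1), where pa = "-b" and pb = be and qa = a and qb = "-al"])
      (simp_all add: power2_eq_square algebra_simps)
  then obtain c where "\<forall>k>m. c k = 0" "\<forall>x y. ?d ^ m * G x y = (\<Sum>k\<le>m. c k * ?P x y ^ (m - k) * ?Q x y ^ k)"
    by (blast dest: homogeneous_in_expansion)
  then have "PQ_expansion m e F a b al be c"
    by (simp add: PQ_expansion_def F algebra_simps)
  then show ?thesis by blast
qed

lemma Psi_PQ_expansion_exists:
  "\<exists>c. PQ_expansion (n div 2) (\<lambda>x y. (x + y) ^ delta n) (\<lambda>x y. x ^ n + y ^ n) a b al be c"
proof (cases "even n")
  case True
  then obtain m where n: "n = 2 * m" by blast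
  let ?G = "lucas (\<lambda>x y. 2) (\<lambda>x y. x\<^sup>2 + y\<^sup>2) m"
  show ?thesis
  proof (rule PQ_expansion_exists)
    show "homogeneous_in (\<lambda>x y. x\<^sup>2 + y\<^sup>2) (\<lambda>x y. x * y) (n div 2) ?G"
      using n
      by (simp, intro homogeneous_in_lucas homogeneous_in.const homogeneous_in_linear[where p = 1 and q = 0]) simp
    have "1 * ?G x y = 1 * (x\<^sup>2) ^ m + 1 * (y\<^sup>2) ^ m" for x y
      by (rule lucas_eq_power_sum) simp_all
    then show "x ^ n + y ^ n = (x + y) ^ delta n * ?G x y" for x y
      using n by (simp add: delta_def power_mult)
  qed
next
  case False
  then obtain m where n: "n = 2 * m + 1" using oddE by blast
  let ?G = "lucas (\<lambda>x y. 1) (\<lambda>x y. x\<^sup>2 + y\<^sup>2 - x * y) m"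
  show ?thesis
  proof (rule PQ_expansion_exists)
    show "homogeneous_in (\<lambda>x y. x\<^sup>2 + y\<^sup>2) (\<lambda>x y. x * y) (n div 2) ?G"
      using n
      by (simp, intro homogeneous_in_lucas homogeneous_in.const homogeneous_in_linear[where p = 1 and q = "-1"]) simp
    have "(x + y) * ?G x y = x * (x\<^sup>2) ^ m + y * (y\<^sup>2) ^ m" for x y
      by (rule lucas_eq_power_sum) (simp_all add: power2_eq_square algebra_simps)
    then show "x ^ n + y ^ n = (x + y) ^ delta n * ?G x y" for x y
      using n by (simp add: delta_def power_mult)
  qed
qed

lemma Phi_PQ_expansion_exists:
  assumes "n \<ge> 1"
  shows "\<exists>c. PQ_expansion ((n - 1) div 2) (\<lambda>x y. (x - y) * (x + y) ^ delta (n - 1)) (\<lambda>x y. x ^ n - y ^ n)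
    a b al be c"
proof (cases "odd n")
  case True
  then obtain m where n: "n = 2 * m + 1" using oddE by blast
  let ?G = "lucas (\<lambda>x y. 1) (\<lambda>x y. x\<^sup>2 + y\<^sup>2 + x * y) m"
  show ?thesis
  proof (rule PQ_expansion_exists)
    show "homogeneous_in (\<lambda>x y. x\<^sup>2 + y\<^sup>2) (\<lambda>x y. x * y) ((n - 1) div 2) ?G"
      using n
      by (simp, intro homogeneous_in_lucas homogeneous_in.const homogeneous_in_linear[where p = 1 and q = 1]) simp
    have "(x - y) * ?G x y = x * (x\<^sup>2) ^ m + (- y) * (y\<^sup>2) ^ m" for x y
      by (rule lucas_eq_power_sum) (simp_all add: power2_eq_square algebra_simps)
    then show "x ^ n - y ^ n = (x - y) * (x + y) ^ delta (n - 1) * ?G x y" for x y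
      using n by (simp add: delta_def power_mult)
  qed
next
  case False
  then obtain k where "n = 2 * k" by blast
  with assms obtain m where n: "n = 2 * m + 2"
    by (intro that[of "k - 1"]) simp
  let ?G = "lucas (\<lambda>x y. 1) (\<lambda>x y. x\<^sup>2 + y\<^sup>2) m"
  show ?thesis
  proof (rule PQ_expansion_exists)
    show "homogeneous_in (\<lambda>x y. x\<^sup>2 + y\<^sup>2) (\<lambda>x y. x * y) ((n - 1) div 2) ?G"
      using n
      by (simp, intro homogeneous_in_lucas homogeneous_in.const homogeneous_in_linear[where p = 1 and q = 0]) simp
    have "((x - y) * (x + y)) * ?G x y = x\<^sup>2 * (x\<^sup>2) ^ m + (- y\<^sup>2) * (y\<^sup>2) ^ m" for x y
      by (rule lucas_eq_power_sum) (simp_all add: power2_eq_square algebra_simps)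
    moreover have "z ^ n = z\<^sup>2 * (z\<^sup>2) ^ m" for z :: real
      using power_mult[of z 2 "Suc m"] by (simp add: n)
    ultimately show "x ^ n - y ^ n = (x - y) * (x + y) ^ delta (n - 1) * ?G x y" for x y
      using n by (simp add: delta_def)
  qed
qed

lemma infinite_poly_ratio_image:
  fixes p q :: "real poly"
  assumes "p \<noteq> 0" and "\<And>z. q \<noteq> smult z p" and "finite E"
  shows "infinite ((\<lambda>s. poly q s / poly p s) ` {s. poly p s \<noteq> 0 \<and> s \<notin> E})"
proof
  let ?S = "{s. poly p s \<noteq> 0 \<and> s \<notin> E}"
  assume "finite ((\<lambda>s. poly q s / poly p s) ` ?S)"
  moreover have "finite {s. poly (q - smult z p) s = 0}" for z
    using assms(2) by (intro poly_roots_finite) simp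
  moreover have "?S \<subseteq> (\<Union>z \<in> (\<lambda>s. poly q s / poly p s) ` ?S. {s. poly (q - smult z p) s = 0})"
    by auto
  ultimately have "finite ?S"
    by (meson finite_UN_I finite_subset)
  moreover have "UNIV = ?S \<union> {s. poly p s = 0} \<union> E"
    by auto
  ultimately have "finite (UNIV :: real set)"
    using poly_roots_finite[OF assms(1)] assms(3) by (metis finite_Un)
  then show False
    using infinite_UNIV_char_0 by blast
qed

lemma form_coeffs_eq_0:
  fixes p q :: "real poly" and c :: "nat \<Rightarrow> real"
  assumes "p \<noteq> 0" and "\<And>z. q \<noteq> smult z p" and "finite E"
    and vanish: "\<And>s. s \<notin> E \<Longrightarrow> (\<Sum>k\<le>m. c k * poly p s ^ (m - k) * poly q s ^ k) = 0"
    and "k \<le> m"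
  shows "c k = 0"
proof -
  define g where "g = (\<Sum>k\<le>m. monom (c k) k)"
  have "poly g (poly q s / poly p s) = 0" if s: "poly p s \<noteq> 0" "s \<notin> E" for s
  proof -
    have "poly g (poly q s / poly p s) = (\<Sum>k\<le>m. c k * poly p s ^ (m - k) * poly q s ^ k) / poly p s ^ m"
      unfolding g_def poly_sum poly_monom sum_divide_distrib
    proof (rule sum.cong[OF refl])
      fix k assume "k \<in> {..m}"
      then have "poly p s ^ m = poly p s ^ (m - k) * poly p s ^ k"
        by (simp flip: power_add)
      then show "c k * (poly q s / poly p s) ^ k = c k * poly p s ^ (m - k) * poly q s ^ k / poly p s ^ m"
        using s(1) by (simp add: power_divide)
    qed
    then show ?thesis
      using vanish[OF s(2)] by simp
  qed
  then have "(\<lambda>s. poly q s / poly p s) ` {s. poly p s \<noteq> 0 \<and> s \<notin> E} \<subseteq> {z. poly g z = 0}"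
    by auto
  then have "g = 0"
    using infinite_poly_ratio_image[OF assms(1-3)] poly_roots_finite finite_subset by blast
  then have "coeff g k = 0"
    by simp
  then show ?thesis
    using \<open>k \<le> m\<close> by (simp add: g_def coeff_sum coeff_monom)
qed

lemma PQ_expansion_unique:
  assumes d: "be * a - al * b \<noteq> 0" and E: "finite {s. e 1 s = 0}"
    and c: "PQ_expansion m e F a b al be c" and c': "PQ_expansion m e F a b al be c'"
  shows "c' = c"
proof
  fix k
  show "c' k = c k"
  proof (cases "k \<le> m")
    case False
    with c c' show ?thesis
      by (simp add: PQ_expansion_def)
  next
    case True
    have "c' k - c k = 0"
    proof (rule form_coeffs_eq_0[where p = "[:al, be, al:]" and q = "[:a, b, a:]", OF _ _ E _ True])
      show "[:al, be, al:] \<noteq> 0" and "[:a, b, a:] \<noteq> smult z [:al, be, al:]" for z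
        using d by auto
      fix s assume "s \<notin> {s. e 1 s = 0}"
      let ?P = "al * 1\<^sup>2 + be * 1 * s + al * s\<^sup>2" and ?Q = "a * 1\<^sup>2 + b * 1 * s + a * s\<^sup>2"
      have "e 1 s * (\<Sum>k\<le>m. c' k * ?P ^ (m - k) * ?Q ^ k) = e 1 s * (\<Sum>k\<le>m. c k * ?P ^ (m - k) * ?Q ^ k)"
        using c c' unfolding PQ_expansion_def by metis
      with \<open>s \<notin> {s. e 1 s = 0}\<close>
      have "(\<Sum>k\<le>m. c' k * ?P ^ (m - k) * ?Q ^ k) - (\<Sum>k\<le>m. c k * ?P ^ (m - k) * ?Q ^ k) = 0"
        by simp
      moreover have "poly [:al, be, al:] s = ?P" and "poly [:a, b, a:] s = ?Q"
        by (simp_all add: algebra_simps power2_eq_square)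
      ultimately show "(\<Sum>k\<le>m. (c' k - c k) * poly [:al, be, al:] s ^ (m - k) * poly [:a, b, a:] s ^ k) = 0"
        by (simp only:) (simp add: left_diff_distrib sum_subtractf)
    qed
    then show ?thesis
      by simp
  qed
qed

lemma THE_PQ_expansion:
  assumes "be * a - al * b \<noteq> 0" and "finite {s. e 1 s = 0}" and "PQ_expansion m e F a b al be c"
  shows "(THE c. PQ_expansion m e F a b al be c) = c"
  using assms by (blast intro: the_equality PQ_expansion_unique)

definition shift_coeffs :: "(nat \<Rightarrow> real) \<Rightarrow> nat \<Rightarrow> real \<Rightarrow> nat \<Rightarrow> real" where
  "shift_coeffs c m t j = (\<Sum>k\<le>m. c k * of_nat (k choose j) * t ^ (k - j))"

lemma sum_shift_coeffs:
  fixes P R t :: real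
  shows "(\<Sum>j\<le>m. shift_coeffs c m t j * P ^ (m - j) * R ^ j) = (\<Sum>k\<le>m. c k * P ^ (m - k) * (R + t * P) ^ k)"
proof -
  have binomial: "(\<Sum>j\<le>m. of_nat (k choose j) * t ^ (k - j) * P ^ (m - j) * R ^ j) = P ^ (m - k) * (R + t * P) ^ k"
    if "k \<le> m" for k
  proof -
    have "(\<Sum>j\<le>m. of_nat (k choose j) * t ^ (k - j) * P ^ (m - j) * R ^ j)
        = (\<Sum>j\<le>k. P ^ (m - k) * (of_nat (k choose j) * R ^ j * (t * P) ^ (k - j)))"
    proof (rule sum.mono_neutral_cong_right)
      fix j assume "j \<in> {..k}"
      then have "P ^ (m - j) = P ^ (m - k) * P ^ (k - j)"
        using that by (simp flip: power_add)
      then show "of_nat (k choose j) * t ^ (k - j) * P ^ (m - j) * R ^ j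
          = P ^ (m - k) * (of_nat (k choose j) * R ^ j * (t * P) ^ (k - j))"
        by (simp add: power_mult_distrib algebra_simps)
    qed (use that in auto)
    also have "\<dots> = P ^ (m - k) * (R + t * P) ^ k"
      by (simp add: binomial_ring sum_distrib_left)
    finally show ?thesis .
  qed
  have "(\<Sum>j\<le>m. shift_coeffs c m t j * P ^ (m - j) * R ^ j)
      = (\<Sum>k\<le>m. c k * (\<Sum>j\<le>m. of_nat (k choose j) * t ^ (k - j) * P ^ (m - j) * R ^ j))"
    unfolding shift_coeffs_def sum_distrib_left sum_distrib_right
    by (subst sum.swap) (simp add: mult.assoc)
  also have "\<dots> = (\<Sum>k\<le>m. c k * P ^ (m - k) * (R + t * P) ^ k)"
    using binomial by (intro sum.cong refl) (simp add: mult.assoc)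
  finally show ?thesis .
qed

lemma PQ_expansion_shift:
  assumes "PQ_expansion m e F a b al be c"
  shows "PQ_expansion m e F (a - al * t) (b - be * t) al be (shift_coeffs c m t)"
  unfolding PQ_expansion_def
proof (intro conjI allI impI)
  fix j assume "m < j"
  then show "shift_coeffs c m t j = 0"
    unfolding shift_coeffs_def by (intro sum.neutral) auto
next
  fix x y :: real
  let ?P = "al * x\<^sup>2 + be * x * y + al * y\<^sup>2"
  let ?R = "(a - al * t) * x\<^sup>2 + (b - be * t) * x * y + (a - al * t) * y\<^sup>2"
  have "?R + t * ?P = a * x\<^sup>2 + b * x * y + a * y\<^sup>2"
    by (simp add: algebra_simps)
  then have "(be * a - al * b) ^ m * F x y = e x y * (\<Sum>j\<le>m. shift_coeffs c m t j * ?P ^ (m - j) * ?R ^ j)"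
    using assms by (simp add: PQ_expansion_def sum_shift_coeffs)
  moreover have "be * (a - al * t) - al * (b - be * t) = be * a - al * b"
    by (simp add: algebra_simps)
  ultimately show "(be * (a - al * t) - al * (b - be * t)) ^ m * F x y
      = e x y * (\<Sum>j\<le>m. shift_coeffs c m t j * ?P ^ (m - j) * ?R ^ j)"
    by simp
qed

lemma has_real_derivative_shift_coeffs:
  "((\<lambda>t. shift_coeffs c m t i) has_real_derivative (real (Suc i) * shift_coeffs c m \<theta> (Suc i))) (at \<theta>)"
proof -
  have "((\<lambda>t. shift_coeffs c m t i) has_real_derivative
      (\<Sum>k\<le>m. c k * of_nat (k choose i) * (of_nat (k - i) * \<theta> ^ (k - i - 1)))) (at \<theta>)"
    unfolding shift_coeffs_def by (intro derivative_eq_intros) auto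
  moreover have term_eq: "c k * of_nat (k choose i) * (of_nat (k - i) * \<theta> ^ (k - i - 1))
      = real (Suc i) * (c k * of_nat (k choose Suc i) * \<theta> ^ (k - Suc i))" for k
  proof -
    have "(k - i) * (k choose i) = Suc i * (k choose Suc i)"
      by (metis binomial_absorb_comp binomial_absorption)
    then have "real (k - i) * real (k choose i) = real (Suc i) * real (k choose Suc i)"
      by (metis of_nat_mult)
    moreover have "c k * of_nat (k choose i) * (of_nat (k - i) * \<theta> ^ (k - i - 1))
        = c k * \<theta> ^ (k - Suc i) * (real (k - i) * real (k choose i))"
      by (simp add: mult_ac)
    ultimately show ?thesis
      by (simp only: mult_ac)
  qed
  ultimately show ?thesis
    unfolding shift_coeffs_def sum_distrib_left by (simp only: term_eq)
qed

lemma THE_PQ_expansion_coeff_recursion: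
  assumes d: "be * a - al * b \<noteq> 0" and E: "finite {s. e 1 s = 0}"
    and c: "PQ_expansion m e F a b al be c" and r: "1 \<le> r"
  shows "\<exists>D. ((\<lambda>t. (THE c. PQ_expansion m e F (a - al * t) (b - be * t) al be c) (r - 1))
              has_real_derivative D) (at \<theta>)
          \<and> (THE c. PQ_expansion m e F (a - al * \<theta>) (b - be * \<theta>) al be c) r = - (1 / real r) * (- D)"
proof -
  have "(THE c. PQ_expansion m e F (a - al * t) (b - be * t) al be c) = shift_coeffs c m t" for t
  proof (rule THE_PQ_expansion[OF _ E PQ_expansion_shift[OF c]])
    show "be * (a - al * t) - al * (b - be * t) \<noteq> 0"
      using d by (simp add: algebra_simps)
  qed
  moreover have "((\<lambda>t. shift_coeffs c m t (r - 1)) has_real_derivative (real r * shift_coeffs c m \<theta> r)) (at \<theta>)"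
    using has_real_derivative_shift_coeffs[of c m "r - 1" \<theta>] r by simp
  ultimately show ?thesis
    using r by auto
qed

theorem corollary8p3:
  fixes n :: nat and a b al be :: real
  assumes "n \<ge> 1" and "be * a - al * b \<noteq> 0"
  shows "(\<forall>\<theta> :: real. \<forall>r :: nat. 1 \<le> r \<and> r \<le> n div 2 \<longrightarrow>
            (\<exists>D. ((\<lambda>t. Psi n (r - 1) (a - al * t) (b - be * t) al be) has_real_derivative D) (at \<theta>)
                 \<and> Psi n r (a - al * \<theta>) (b - be * \<theta>) al be = - (1 / real r) * (- D)))
       \<and> (\<forall>\<theta> :: real. \<forall>r :: nat. 1 \<le> r \<and> r \<le> (n - 1) div 2 \<longrightarrow>
            (\<exists>D. ((\<lambda>t. Phi n (r - 1) (a - al * t) (b - be * t) al be) has_real_derivative D) (at \<theta>)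
                 \<and> Phi n r (a - al * \<theta>) (b - be * \<theta>) al be = - (1 / real r) * (- D)))"
proof (intro conjI allI impI)
  fix \<theta> :: real and r :: nat
  assume "1 \<le> r \<and> r \<le> n div 2"
  moreover obtain c where "PQ_expansion (n div 2) (\<lambda>x y. (x + y) ^ delta n) (\<lambda>x y. x ^ n + y ^ n) a b al be c"
    using Psi_PQ_expansion_exists by blast
  moreover have "finite {s :: real. (1 + s) ^ delta n = 0}"
    by (rule finite_subset[of _ "{-1}"]) auto
  ultimately show "\<exists>D. ((\<lambda>t. Psi n (r - 1) (a - al * t) (b - be * t) al be) has_real_derivative D) (at \<theta>)
      \<and> Psi n r (a - al * \<theta>) (b - be * \<theta>) al be = - (1 / real r) * (- D)"
    unfolding Psi_eq_THE_PQ_expansion by (intro THE_PQ_expansion_coeff_recursion[OF assms(2)]) auto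
next
  fix \<theta> :: real and r :: nat
  assume "1 \<le> r \<and> r \<le> (n - 1) div 2"
  moreover obtain c where "PQ_expansion ((n - 1) div 2) (\<lambda>x y. (x - y) * (x + y) ^ delta (n - 1))
      (\<lambda>x y. x ^ n - y ^ n) a b al be c"
    using Phi_PQ_expansion_exists[OF assms(1)] by blast
  moreover have "finite {s :: real. (1 - s) * (1 + s) ^ delta (n - 1) = 0}"
    by (rule finite_subset[of _ "{1, -1}"]) auto
  ultimately show "\<exists>D. ((\<lambda>t. Phi n (r - 1) (a - al * t) (b - be * t) al be) has_real_derivative D) (at \<theta>)
      \<and> Phi n r (a - al * \<theta>) (b - be * \<theta>) al be = - (1 / real r) * (- D)"
    unfolding Phi_eq_THE_PQ_expansion by (intro THE_PQ_expansion_coeff_recursion[OF assms(2)]) auto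
qed

end
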